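(* For every $\lambda>0$, the function $R_\lambda(e)=\partial_eF(\lambda,e)$ is strictly increasing and strictly concave on $I_\lambda$.
   Context: Let $\gamma>0$; let $a_1,\dots,a_p>0$ with weights $\omega_i>0$, $\sum_i\omega_i=1$, and $b_1,\dots,b_n>0$ with weights $\pi_j>0$, $\sum_j\pi_j=1$; put $a^*=\max_i a_i$, $b^*=\max_j b_j$. Define $G(e)=\sum_{j=1}^n\frac{b_j\pi_j}{1+\gamma b_j e}$, $J=\{e: e>-1/(\gamma b^* )\}$, and for $\lambda>0$, $I_\lambda=\{e\in J: G(e)<\lambda/a^*\}$. Define $F(\lambda,e)=e-\sum_{i=1}^p\frac{a_i\omega_i}{a_iG(e)-\lambda}$. *)

theory Defs
  imports "HOL-Analysis.Analysis"
begin

definition strict_concave_on :: "real set \<Rightarrow> (real \<Rightarrow> real) \<Rightarrow> bool" where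
  "strict_concave_on S f \<longleftrightarrow>
     (\<forall>x\<in>S. \<forall>y\<in>S. x \<noteq> y \<longrightarrow> (\<forall>t. 0 < t \<and> t < 1 \<longrightarrow>
        (1 - t) * f x + t * f y < f ((1 - t) * x + t * y)))"

definition G :: "real \<Rightarrow> nat \<Rightarrow> (nat \<Rightarrow> real) \<Rightarrow> (nat \<Rightarrow> real) \<Rightarrow> real \<Rightarrow> real" where
  "G \<gamma> n b \<pi> e = (\<Sum>j=1..n. b j * \<pi> j / (1 + \<gamma> * b j * e))"

definition F :: "real \<Rightarrow> nat \<Rightarrow> (nat \<Rightarrow> real) \<Rightarrow> (nat \<Rightarrow> real) \<Rightarrow> nat \<Rightarrow> (nat \<Rightarrow> real) \<Rightarrow> (nat \<Rightarrow> real)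
                  \<Rightarrow> real \<Rightarrow> real \<Rightarrow> real" where
  "F \<gamma> p a \<omega> n b \<pi> lam e = e - (\<Sum>i=1..p. a i * \<omega> i / (a i * G \<gamma> n b \<pi> e - lam))"

definition J :: "real \<Rightarrow> nat \<Rightarrow> (nat \<Rightarrow> real) \<Rightarrow> real set" where
  "J \<gamma> n b = {e. e > - 1 / (\<gamma> * Max (b ` {1..n}))}"

definition I :: "real \<Rightarrow> nat \<Rightarrow> (nat \<Rightarrow> real) \<Rightarrow> nat \<Rightarrow> (nat \<Rightarrow> real) \<Rightarrow> (nat \<Rightarrow> real)
                  \<Rightarrow> real \<Rightarrow> real set" where
  "I \<gamma> p a n b \<pi> lam = {e \<in> J \<gamma> n b. G \<gamma> n b \<pi> e < lam / Max (a ` {1..p})}"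

definition R :: "real \<Rightarrow> nat \<Rightarrow> (nat \<Rightarrow> real) \<Rightarrow> (nat \<Rightarrow> real) \<Rightarrow> nat \<Rightarrow> (nat \<Rightarrow> real) \<Rightarrow> (nat \<Rightarrow> real)
                  \<Rightarrow> real \<Rightarrow> real \<Rightarrow> real" where
  "R \<gamma> p a \<omega> n b \<pi> lam e = deriv (\<lambda>x. F \<gamma> p a \<omega> n b \<pi> lam x) e"

end

theory Submission
  imports Defs
begin

text \<open>
  G is a positive combination of the functions \<open>e \<mapsto> 1 / (1 + \<gamma> b\<^sub>j e)\<close>, so on J its
  derivatives alternate in sign: \<open>(-1)^k G^(k) > 0\<close>. Moreover
  \<open>F(\<lambda>, e) = e + \<Sum>\<^sub>i \<phi>\<^sub>i(G(e))\<close> with \<open>\<phi>\<^sub>i(x) = a\<^sub>i \<omega>\<^sub>i / (\<lambda> - a\<^sub>i x)\<close>, and all derivatives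
  of \<open>\<phi>\<^sub>i\<close> are positive for \<open>x < \<lambda> / a\<^sub>i\<close>, in particular at \<open>x = G(e)\<close> for \<open>e \<in> I\<^sub>\<lambda>\<close>.
  By the chain rule (Faa di Bruno up to order three)
  \<open>R' = \<Sum>\<^sub>i \<phi>\<^sub>i''(G) G'^2 + \<phi>\<^sub>i'(G) G''\<close> and
  \<open>R'' = \<Sum>\<^sub>i \<phi>\<^sub>i'''(G) G'^3 + 3 \<phi>\<^sub>i''(G) G' G'' + \<phi>\<^sub>i'(G) G'''\<close>,
  where every summand of R' is positive and every summand of R'' is negative. Since G is
  decreasing, \<open>I\<^sub>\<lambda>\<close> is an interval, on which these signs give strict monotonicity and strict
  concavity.
\<close>

lemma convex_atLeastAtMost_subset:
  fixes x y :: real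
  assumes "convex S" and "x \<in> S" and "y \<in> S"
  shows "{x..y} \<subseteq> S"
proof (cases "x \<le> y")
  case True
  then show ?thesis
    using closed_segment_subset[OF assms(2,3,1)] by (simp add: closed_segment_eq_real_ivl1)
qed simp

lemma strict_mono_on_if_deriv_pos:
  fixes f f' :: "real \<Rightarrow> real"
  assumes "convex S"
    and deriv: "\<And>x. x \<in> S \<Longrightarrow> (f has_real_derivative f' x) (at x)"
    and pos: "\<And>x. x \<in> S \<Longrightarrow> f' x > 0"
  shows "strict_mono_on S f"
proof (rule strict_mono_onI)
  fix x y assume "x \<in> S" "y \<in> S" "x < y"
  then have "{x..y} \<subseteq> S"
    using \<open>convex S\<close> by (intro convex_atLeastAtMost_subset)
  show "f x < f y"
  proof (rule DERIV_pos_imp_increasing[OF \<open>x < y\<close>])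
    fix z assume "x \<le> z" "z \<le> y"
    with \<open>{x..y} \<subseteq> S\<close> have "z \<in> S" by auto
    then show "\<exists>d. (f has_real_derivative d) (at z) \<and> d > 0"
      using deriv pos by blast
  qed
qed

lemma strict_concave_on_if_second_deriv_neg:
  fixes f f' f'' :: "real \<Rightarrow> real"
  assumes "convex S"
    and deriv: "\<And>x. x \<in> S \<Longrightarrow> (f has_real_derivative f' x) (at x)"
    and deriv2: "\<And>x. x \<in> S \<Longrightarrow> (f' has_real_derivative f'' x) (at x)"
    and neg: "\<And>x. x \<in> S \<Longrightarrow> f'' x < 0"
  shows "strict_concave_on S f"
proof -
  have antimono: "strict_mono_on S (\<lambda>x. - f' x)"
    using \<open>convex S\<close> by (rule strict_mono_on_if_deriv_pos) (use deriv2 neg in \<open>auto intro: DERIV_minus\<close>)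
  have mvt: "\<exists>z\<in>{x<..<y}. z \<in> S \<and> f y - f x = (y - x) * f' z"
    if "x \<in> S" "y \<in> S" "x < y" for x y
  proof -
    have "{x..y} \<subseteq> S"
      using \<open>convex S\<close> that by (intro convex_atLeastAtMost_subset)
    then have "(f has_real_derivative f' z) (at z)" if "x \<le> z" "z \<le> y" for z
      using deriv that by auto
    then obtain z where "x < z" "z < y" "f y - f x = (y - x) * f' z"
      using MVT2[OF \<open>x < y\<close>] by blast
    moreover have "z \<in> S"
      using \<open>{x..y} \<subseteq> S\<close> \<open>x < z\<close> \<open>z < y\<close> by auto
    ultimately show ?thesis by auto
  qed
  have below: "(1 - t) * f x + t * f y < f ((1 - t) * x + t * y)"
    if "x \<in> S" "y \<in> S" "x < y" "0 < t" "t < 1" for x y t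
  proof -
    define z where "z = (1 - t) * x + t * y"
    have zx: "z - x = t * (y - x)" and yz: "y - z = (1 - t) * (y - x)"
      unfolding z_def by (simp_all add: algebra_simps)
    have "0 < t * (y - x)" "0 < (1 - t) * (y - x)"
      using that by (simp_all add: mult_pos_pos)
    then have "x < z" "z < y"
      unfolding zx [symmetric] yz [symmetric] by simp_all
    then have "z \<in> S"
      using convex_atLeastAtMost_subset[OF \<open>convex S\<close> \<open>x \<in> S\<close> \<open>y \<in> S\<close>] by auto
    obtain u where u: "u < z" "u \<in> S" "f z - f x = (z - x) * f' u"
      using mvt[OF \<open>x \<in> S\<close> \<open>z \<in> S\<close> \<open>x < z\<close>] by auto
    obtain v where v: "z < v" "v \<in> S" "f y - f z = (y - z) * f' v"
      using mvt[OF \<open>z \<in> S\<close> \<open>y \<in> S\<close> \<open>z < y\<close>] by auto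
    have "f' v < f' u"
      using antimono u v by (auto dest: strict_mono_onD)
    have "(1 - t) * f x + t * f y - f z = t * (f y - f z) - (1 - t) * (f z - f x)"
      by (simp add: algebra_simps)
    also have "\<dots> = t * (1 - t) * (y - x) * (f' v - f' u)"
      by (simp only: u(3) v(3) zx yz) (simp add: algebra_simps)
    also have "\<dots> < 0"
      using that \<open>f' v < f' u\<close> by (simp add: mult_pos_neg)
    finally show ?thesis unfolding z_def by simp
  qed
  show ?thesis
    unfolding strict_concave_on_def
  proof (intro ballI impI allI)
    fix x y t :: real assume "x \<in> S" "y \<in> S" "x \<noteq> y" and t: "0 < t \<and> t < 1"
    then consider "x < y" | "y < x" by linarith
    then show "(1 - t) * f x + t * f y < f ((1 - t) * x + t * y)"
    proof cases
      case 1 then show ?thesis using below \<open>x \<in> S\<close> \<open>y \<in> S\<close> t by blast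
    next
      case 2 then show ?thesis using below[of y x "1 - t"] \<open>x \<in> S\<close> \<open>y \<in> S\<close> t
        by (simp add: algebra_simps)
    qed
  qed
qed

lemma strict_concave_on_cong:
  assumes "convex S" and "\<And>x. x \<in> S \<Longrightarrow> f x = g x"
  shows "strict_concave_on S f \<longleftrightarrow> strict_concave_on S g"
proof -
  have "(1 - t) * x + t * y \<in> S" if "x \<in> S" "y \<in> S" "0 < t" "t < 1" for x y t
    using \<open>convex S\<close> that unfolding convex_alt by simp
  then show ?thesis
    unfolding strict_concave_on_def using assms(2) by auto
qed

lemma second_deriv_compose:
  fixes g g1 g2 \<phi>1 \<phi>2 :: "real \<Rightarrow> real"
  assumes g: "(g has_real_derivative g1 x) (at x)" and g1: "(g1 has_real_derivative g2 x) (at x)"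
    and \<phi>1: "(\<phi>1 has_real_derivative \<phi>2 (g x)) (at (g x))"
  shows "((\<lambda>x. \<phi>1 (g x) * g1 x) has_real_derivative \<phi>2 (g x) * (g1 x)^2 + \<phi>1 (g x) * g2 x) (at x)"
  using DERIV_mult[OF DERIV_chain2[OF \<phi>1 g] g1] by (simp add: power2_eq_square algebra_simps)

lemma third_deriv_compose:
  fixes g g1 g2 g3 \<phi>1 \<phi>2 \<phi>3 :: "real \<Rightarrow> real"
  assumes g: "(g has_real_derivative g1 x) (at x)" and g1: "(g1 has_real_derivative g2 x) (at x)"
    and g2: "(g2 has_real_derivative g3 x) (at x)"
    and \<phi>1: "(\<phi>1 has_real_derivative \<phi>2 (g x)) (at (g x))"
    and \<phi>2: "(\<phi>2 has_real_derivative \<phi>3 (g x)) (at (g x))"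
  shows "((\<lambda>x. \<phi>2 (g x) * (g1 x)^2 + \<phi>1 (g x) * g2 x) has_real_derivative
           \<phi>3 (g x) * (g1 x)^3 + 3 * \<phi>2 (g x) * g1 x * g2 x + \<phi>1 (g x) * g3 x) (at x)"
  using DERIV_add[OF DERIV_mult[OF DERIV_chain2[OF \<phi>2 g] DERIV_power[OF g1, of 2]]
                     DERIV_mult[OF DERIV_chain2[OF \<phi>1 g] g2]]
  by (simp add: power2_eq_square power3_eq_cube algebra_simps)

definition inverse_affine_deriv :: "real \<Rightarrow> real \<Rightarrow> nat \<Rightarrow> real \<Rightarrow> real" where
  "inverse_affine_deriv d s k x = fact k * (- s) ^ k / (d + s * x) ^ Suc k"

lemma inverse_affine_deriv_0: "inverse_affine_deriv d s 0 x = 1 / (d + s * x)"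
  by (simp add: inverse_affine_deriv_def)

lemma has_real_derivative_inverse_affine_deriv:
  assumes "d + s * x \<noteq> 0"
  shows "(inverse_affine_deriv d s k has_real_derivative inverse_affine_deriv d s (Suc k) x) (at x)"
proof -
  define u where "u = d + s * x"
  have "u \<noteq> 0" using assms unfolding u_def .
  have "(inverse_affine_deriv d s k has_real_derivative
      - (fact k * (- s) ^ k * (real (Suc k) * u ^ k * s)) / (u ^ Suc k)\<^sup>2) (at x)"
    unfolding inverse_affine_deriv_def [abs_def] u_def
    by (rule derivative_eq_intros refl)+ (use assms in \<open>simp_all add: power2_eq_square\<close>)
  moreover have "(u ^ Suc k)\<^sup>2 = u ^ k * u ^ Suc (Suc k)"
    by (simp add: power2_eq_square power_add[symmetric])
  ultimately show ?thesis
    using \<open>u \<noteq> 0\<close> by (simp add: inverse_affine_deriv_def u_def[symmetric] mult_ac)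
qed

lemma inverse_affine_deriv_pos:
  assumes "d + s * x > 0" and "s < 0"
  shows "inverse_affine_deriv d s k x > 0"
  using assms by (simp add: inverse_affine_deriv_def)

lemma inverse_affine_deriv_alternating:
  assumes "d + s * x > 0" and "s > 0"
  shows "(-1) ^ k * inverse_affine_deriv d s k x > 0"
proof -
  have "(-1) ^ k * inverse_affine_deriv d s k x = fact k * s ^ k / (d + s * x) ^ Suc k"
    by (simp add: inverse_affine_deriv_def power_minus')
  then show ?thesis using assms by simp
qed

locale weighted_spectra =
  fixes \<gamma> :: real and p :: nat and a \<omega> :: "nat \<Rightarrow> real" and n :: nat and b \<pi> :: "nat \<Rightarrow> real"
  assumes gamma_pos: "\<gamma> > 0"
    and a_pos: "\<And>i. i \<in> {1..p} \<Longrightarrow> a i > 0" and omega_pos: "\<And>i. i \<in> {1..p} \<Longrightarrow> \<omega> i > 0"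
    and b_pos: "\<And>j. j \<in> {1..n} \<Longrightarrow> b j > 0" and pi_pos: "\<And>j. j \<in> {1..n} \<Longrightarrow> \<pi> j > 0"
    and p_pos: "p > 0" and n_pos: "n > 0"
begin

definition G_deriv :: "nat \<Rightarrow> real \<Rightarrow> real" where
  "G_deriv k e = (\<Sum>j=1..n. b j * \<pi> j * inverse_affine_deriv 1 (\<gamma> * b j) k e)"

lemma G_eq_G_deriv_0: "G \<gamma> n b \<pi> e = G_deriv 0 e"
  by (simp add: G_def G_deriv_def inverse_affine_deriv_0)

lemma J_denominator_pos:
  assumes "e \<in> J \<gamma> n b" and "j \<in> {1..n}"
  shows "1 + \<gamma> * b j * e > 0"
proof -
  define B where "B = Max (b ` {1..n})"
  have "b j \<le> B"
    using assms(2) unfolding B_def by simp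
  with b_pos[OF assms(2)] have "B > 0" by linarith
  moreover have "- 1 / (\<gamma> * B) < e"
    using assms(1) unfolding J_def B_def by simp
  ultimately have "-1 < \<gamma> * B * e"
    using gamma_pos by (simp add: field_simps)
  show ?thesis
  proof (cases "e \<ge> 0")
    case True
    then show ?thesis
      using gamma_pos b_pos[OF assms(2)] by (intro add_pos_nonneg mult_nonneg_nonneg) auto
  next
    case False
    then have "\<gamma> * B * e \<le> \<gamma> * b j * e"
      using \<open>b j \<le> B\<close> gamma_pos by (simp add: mult_right_mono_neg)
    then show ?thesis using \<open>-1 < \<gamma> * B * e\<close> by linarith
  qed
qed

lemma has_real_derivative_G_deriv:
  assumes "e \<in> J \<gamma> n b"
  shows "(G_deriv k has_real_derivative G_deriv (k + 1) e) (at e)"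
  unfolding G_deriv_def [abs_def] Suc_eq_plus1 [symmetric]
  by (intro DERIV_sum DERIV_cmult has_real_derivative_inverse_affine_deriv)
     (use J_denominator_pos[OF assms] in force)

lemma G_deriv_alternating:
  assumes "e \<in> J \<gamma> n b"
  shows "(-1) ^ k * G_deriv k e > 0"
proof -
  have "(-1) ^ k * G_deriv k e = (\<Sum>j=1..n. b j * \<pi> j * ((-1) ^ k * inverse_affine_deriv 1 (\<gamma> * b j) k e))"
    by (simp add: G_deriv_def sum_distrib_left mult_ac)
  also have "\<dots> > 0"
    using n_pos J_denominator_pos[OF assms] gamma_pos b_pos pi_pos
    by (intro sum_pos) (auto intro!: mult_pos_pos inverse_affine_deriv_alternating)
  finally show ?thesis .
qed

lemma G_deriv_signs:
  assumes "e \<in> J \<gamma> n b"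
  shows "G_deriv 0 e > 0" "G_deriv 1 e < 0" "G_deriv 2 e > 0" "G_deriv 3 e < 0"
  using G_deriv_alternating[OF assms, of 0] G_deriv_alternating[OF assms, of 1]
    G_deriv_alternating[OF assms, of 2] G_deriv_alternating[OF assms, of 3]
  by simp_all

lemma convex_J: "convex (J \<gamma> n b)"
proof -
  have "J \<gamma> n b = {- 1 / (\<gamma> * Max (b ` {1..n}))<..}"
    by (auto simp: J_def)
  then show ?thesis by simp
qed

lemma convex_I: "convex (I \<gamma> p a n b \<pi> lam)"
proof -
  have G_decreasing: "strict_mono_on (J \<gamma> n b) (\<lambda>e. - G_deriv 0 e)"
    using convex_J
  proof (rule strict_mono_on_if_deriv_pos)
    fix e assume "e \<in> J \<gamma> n b"
    show "((\<lambda>e. - G_deriv 0 e) has_real_derivative - G_deriv 1 e) (at e)"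
      using DERIV_minus[OF has_real_derivative_G_deriv[OF \<open>e \<in> J \<gamma> n b\<close>, of 0]] by simp
    show "- G_deriv 1 e > 0"
      using G_deriv_signs(2)[OF \<open>e \<in> J \<gamma> n b\<close>] by simp
  qed
  have "z \<in> I \<gamma> p a n b \<pi> lam"
    if "x \<in> I \<gamma> p a n b \<pi> lam" "y \<in> I \<gamma> p a n b \<pi> lam" "x \<le> z" "z \<le> y" for x y z
  proof -
    have "x \<in> J \<gamma> n b" "y \<in> J \<gamma> n b"
      using that by (simp_all add: I_def)
    then have "z \<in> J \<gamma> n b"
      using convex_J that(3,4) unfolding is_interval_convex_1[symmetric] is_interval_1 by blast
    have "G_deriv 0 z \<le> G_deriv 0 x"
      using strict_mono_onD[OF G_decreasing \<open>x \<in> J \<gamma> n b\<close> \<open>z \<in> J \<gamma> n b\<close>] \<open>x \<le> z\<close>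
      by (cases "x = z") auto
    then show ?thesis
      using that(1) \<open>z \<in> J \<gamma> n b\<close> by (simp add: I_def G_eq_G_deriv_0)
  qed
  then show ?thesis
    unfolding is_interval_convex_1[symmetric] is_interval_1 by blast
qed

text \<open>\<open>phi lam i k\<close> is the k-th derivative of \<open>\<phi>\<^sub>i(x) = a\<^sub>i \<omega>\<^sub>i / (\<lambda> - a\<^sub>i x)\<close>.\<close>

definition phi :: "real \<Rightarrow> nat \<Rightarrow> nat \<Rightarrow> real \<Rightarrow> real" where
  "phi lam i k x = a i * \<omega> i * inverse_affine_deriv lam (- a i) k x"

lemma F_eq_sum_phi: "F \<gamma> p a \<omega> n b \<pi> lam e = e + (\<Sum>i=1..p. phi lam i 0 (G_deriv 0 e))"
proof -
  have "a i * \<omega> i / (a i * G_deriv 0 e - lam) = - (a i * \<omega> i / (lam - a i * G_deriv 0 e))" for i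
    by (metis minus_diff_eq divide_minus_right)
  then have "a i * \<omega> i / (a i * G_deriv 0 e - lam) = - phi lam i 0 (G_deriv 0 e)" for i
    by (simp add: phi_def inverse_affine_deriv_0)
  then show ?thesis
    by (simp add: F_def G_eq_G_deriv_0 sum_negf)
qed

lemma has_real_derivative_phi:
  assumes "lam - a i * x \<noteq> 0"
  shows "(phi lam i k has_real_derivative phi lam i (k + 1) x) (at x)"
  unfolding phi_def [abs_def] Suc_eq_plus1 [symmetric]
  by (intro DERIV_cmult has_real_derivative_inverse_affine_deriv) (use assms in simp)

lemma phi_pos:
  assumes "i \<in> {1..p}" and "lam - a i * x > 0"
  shows "phi lam i k x > 0"
  unfolding phi_def
  using assms a_pos omega_pos by (simp add: inverse_affine_deriv_pos)

lemma I_denominator_pos: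
  assumes "e \<in> I \<gamma> p a n b \<pi> lam" and "i \<in> {1..p}"
  shows "lam - a i * G_deriv 0 e > 0"
proof -
  define A where "A = Max (a ` {1..p})"
  have "a i \<le> A"
    using assms(2) unfolding A_def by simp
  with a_pos[OF assms(2)] have "A > 0" by linarith
  have "e \<in> J \<gamma> n b" "G_deriv 0 e < lam / A"
    using assms(1) unfolding I_def A_def by (simp_all add: G_eq_G_deriv_0)
  then have "a i * G_deriv 0 e \<le> A * G_deriv 0 e" "A * G_deriv 0 e < lam"
    using \<open>a i \<le> A\<close> \<open>A > 0\<close> G_deriv_signs(1) by (simp_all add: mult_right_mono field_simps)
  then show ?thesis by linarith
qed

definition R_closed :: "real \<Rightarrow> real \<Rightarrow> real" where
  "R_closed lam e = 1 + (\<Sum>i=1..p. phi lam i 1 (G_deriv 0 e) * G_deriv 1 e)"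

definition R_closed_deriv :: "real \<Rightarrow> real \<Rightarrow> real" where
  "R_closed_deriv lam e =
     (\<Sum>i=1..p. phi lam i 2 (G_deriv 0 e) * (G_deriv 1 e)\<^sup>2 + phi lam i 1 (G_deriv 0 e) * G_deriv 2 e)"

definition R_closed_deriv2 :: "real \<Rightarrow> real \<Rightarrow> real" where
  "R_closed_deriv2 lam e =
     (\<Sum>i=1..p. phi lam i 3 (G_deriv 0 e) * (G_deriv 1 e) ^ 3
        + 3 * phi lam i 2 (G_deriv 0 e) * G_deriv 1 e * G_deriv 2 e + phi lam i 1 (G_deriv 0 e) * G_deriv 3 e)"

lemma
  assumes "e \<in> I \<gamma> p a n b \<pi> lam" and "i \<in> {1..p}"
  shows has_real_derivative_G_deriv_I:
      "(G_deriv 0 has_real_derivative G_deriv 1 e) (at e)"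
      "(G_deriv 1 has_real_derivative G_deriv 2 e) (at e)"
      "(G_deriv 2 has_real_derivative G_deriv 3 e) (at e)"
    and has_real_derivative_phi_I:
      "(phi lam i 0 has_real_derivative phi lam i 1 (G_deriv 0 e)) (at (G_deriv 0 e))"
      "(phi lam i 1 has_real_derivative phi lam i 2 (G_deriv 0 e)) (at (G_deriv 0 e))"
      "(phi lam i 2 has_real_derivative phi lam i 3 (G_deriv 0 e)) (at (G_deriv 0 e))"
proof -
  have "e \<in> J \<gamma> n b"
    using assms(1) by (simp add: I_def)
  then show "(G_deriv 0 has_real_derivative G_deriv 1 e) (at e)"
      "(G_deriv 1 has_real_derivative G_deriv 2 e) (at e)"
      "(G_deriv 2 has_real_derivative G_deriv 3 e) (at e)"
    using has_real_derivative_G_deriv[of e 0] has_real_derivative_G_deriv[of e 1]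
      has_real_derivative_G_deriv[of e 2] by (simp_all del: One_nat_def)
  have "lam - a i * G_deriv 0 e \<noteq> 0"
    using I_denominator_pos[OF assms] by simp
  then show "(phi lam i 0 has_real_derivative phi lam i 1 (G_deriv 0 e)) (at (G_deriv 0 e))"
      "(phi lam i 1 has_real_derivative phi lam i 2 (G_deriv 0 e)) (at (G_deriv 0 e))"
      "(phi lam i 2 has_real_derivative phi lam i 3 (G_deriv 0 e)) (at (G_deriv 0 e))"
    using has_real_derivative_phi[of lam i "G_deriv 0 e" 0] has_real_derivative_phi[of lam i "G_deriv 0 e" 1]
      has_real_derivative_phi[of lam i "G_deriv 0 e" 2] by (simp_all del: One_nat_def)
qed

lemma R_eq_R_closed:
  assumes "e \<in> I \<gamma> p a n b \<pi> lam"
  shows "R \<gamma> p a \<omega> n b \<pi> lam e = R_closed lam e"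
proof -
  have "((\<lambda>e. e + (\<Sum>i=1..p. phi lam i 0 (G_deriv 0 e))) has_real_derivative R_closed lam e) (at e)"
    unfolding R_closed_def
    by (intro DERIV_add DERIV_ident DERIV_sum DERIV_chain2[where f = "phi lam _ 0"])
       (use has_real_derivative_G_deriv_I has_real_derivative_phi_I assms in auto)
  then show ?thesis
    unfolding R_def F_eq_sum_phi by (rule DERIV_imp_deriv)
qed

lemma has_real_derivative_R_closed:
  assumes "e \<in> I \<gamma> p a n b \<pi> lam"
  shows "(R_closed lam has_real_derivative R_closed_deriv lam e) (at e)"
proof -
  have "((\<lambda>e. 1 + (\<Sum>i=1..p. phi lam i 1 (G_deriv 0 e) * G_deriv 1 e)) has_real_derivative
      0 + R_closed_deriv lam e) (at e)"
    unfolding R_closed_deriv_def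
    by (intro DERIV_add DERIV_const DERIV_sum second_deriv_compose)
       (use has_real_derivative_G_deriv_I has_real_derivative_phi_I assms in auto)
  then show ?thesis
    unfolding R_closed_def [abs_def] by simp
qed

lemma has_real_derivative_R_closed_deriv:
  assumes "e \<in> I \<gamma> p a n b \<pi> lam"
  shows "(R_closed_deriv lam has_real_derivative R_closed_deriv2 lam e) (at e)"
  unfolding R_closed_deriv_def [abs_def] R_closed_deriv2_def
  by (intro DERIV_sum third_deriv_compose)
     (use has_real_derivative_G_deriv_I has_real_derivative_phi_I assms in auto)

lemma R_closed_deriv_pos:
  assumes "e \<in> I \<gamma> p a n b \<pi> lam"
  shows "R_closed_deriv lam e > 0"
proof -
  have "e \<in> J \<gamma> n b"
    using assms by (simp add: I_def)
  then show ?thesis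
    unfolding R_closed_deriv_def using p_pos
    by (intro sum_pos add_pos_pos mult_pos_pos phi_pos I_denominator_pos[OF assms])
       (use G_deriv_signs[OF \<open>e \<in> J \<gamma> n b\<close>] in auto)
qed

lemma R_closed_deriv2_neg:
  assumes "e \<in> I \<gamma> p a n b \<pi> lam"
  shows "R_closed_deriv2 lam e < 0"
proof -
  have "e \<in> J \<gamma> n b"
    using assms by (simp add: I_def)
  note G = G_deriv_signs[OF this]
  have "phi lam i 3 (G_deriv 0 e) * (G_deriv 1 e) ^ 3
        + 3 * phi lam i 2 (G_deriv 0 e) * G_deriv 1 e * G_deriv 2 e + phi lam i 1 (G_deriv 0 e) * G_deriv 3 e < 0"
    if "i \<in> {1..p}" for i
  proof -
    have phi: "phi lam i k (G_deriv 0 e) > 0" for k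
      by (rule phi_pos[OF that I_denominator_pos[OF assms that]])
    have "(G_deriv 1 e) ^ 3 < 0" "G_deriv 1 e * G_deriv 2 e < 0"
      using G by (simp_all add: odd_power_less_zero mult_neg_pos)
    then have "phi lam i 3 (G_deriv 0 e) * (G_deriv 1 e) ^ 3 < 0"
      and "3 * phi lam i 2 (G_deriv 0 e) * (G_deriv 1 e * G_deriv 2 e) < 0"
      and "phi lam i 1 (G_deriv 0 e) * G_deriv 3 e < 0"
      using phi G(4) by (simp_all add: mult_pos_neg)
    then show ?thesis
      unfolding mult.assoc by linarith
  qed
  then have "R_closed_deriv2 lam e < (\<Sum>i=1..p. 0)"
    unfolding R_closed_deriv2_def using p_pos by (intro sum_strict_mono) auto
  then show ?thesis by simp
qed

end

theorem proposition3p14: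
  fixes \<gamma> :: real and p n :: nat and a \<omega> b \<pi> :: "nat \<Rightarrow> real"
  assumes "\<gamma> > 0"
    and "\<forall>i\<in>{1..p}. a i > 0" and "\<forall>i\<in>{1..p}. \<omega> i > 0" and "(\<Sum>i=1..p. \<omega> i) = 1"
    and "\<forall>j\<in>{1..n}. b j > 0" and "\<forall>j\<in>{1..n}. \<pi> j > 0" and "(\<Sum>j=1..n. \<pi> j) = 1"
  shows "\<forall>lam>0. strict_mono_on (I \<gamma> p a n b \<pi> lam) (R \<gamma> p a \<omega> n b \<pi> lam)
              \<and> strict_concave_on (I \<gamma> p a n b \<pi> lam) (R \<gamma> p a \<omega> n b \<pi> lam)"
proof (intro allI impI)
  fix lam :: real
  have "p > 0" "n > 0"
    using assms(4,7) by (auto intro: Nat.gr0I)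
  then interpret weighted_spectra \<gamma> p a \<omega> n b \<pi>
    using assms by unfold_locales auto
  let ?I = "I \<gamma> p a n b \<pi> lam"
  have "strict_mono_on ?I (R_closed lam)"
    using convex_I by (rule strict_mono_on_if_deriv_pos) (use has_real_derivative_R_closed R_closed_deriv_pos in auto)
  moreover have "strict_concave_on ?I (R_closed lam)"
    using convex_I by (rule strict_concave_on_if_second_deriv_neg)
      (use has_real_derivative_R_closed has_real_derivative_R_closed_deriv R_closed_deriv2_neg in auto)
  ultimately show "strict_mono_on ?I (R \<gamma> p a \<omega> n b \<pi> lam) \<and> strict_concave_on ?I (R \<gamma> p a \<omega> n b \<pi> lam)"
    using R_eq_R_closed strict_concave_on_cong[OF convex_I R_eq_R_closed] by (auto simp: monotone_on_def)
qed

end
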